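(* For every $n \ge 1$, $$ f^+_n(x) = \sum_{w \in \mathcal{D}^B_n \cap B^*_n} x^{\mathrm{exc}_B(w)} \quad\text{and}\quad f^-_n(x) = \sum_{w \in \mathcal{D}^B_n \setminus B^*_n} x^{\mathrm{exc}_B(w)}. $$
   Context: A signed permutation of $[n]$ is a set $S = \{a_1, \dots, a_n\}$ with $a_i \in \{i, -i\}$, together with a bijection $w : S \to S$. $B_n$ is the set of all of them. - $a \in S$ is a $B$-excedance if $w(a) > a$, or if $a < 0$ and $w(a) = a$; $\mathrm{exc}_B(w)$ is their number. - $\mathcal{D}^B_n$ is the set of $w \in B_n$ having no $a \in S$ with $a > 0$ and $w(a) = a$. - $d^B_n(x) = \sum_{w \in \mathcal{D}^B_n} x^{\mathrm{exc}_B(w)}$. - For $w$ on the set $S$, $m_w$ denotes the minimum element of $S$ in the usual order of $\mathbb{Z}$, and $B^*_n = \{w \in B_n : w(m_w) > 0\}$. - $f^+_n, f^-_n$ are the unique real polynomials with $d^B_n = f^+_n + f^-_n$, $f^+_n(x) = x^n f^+_n(1/x)$ and $f^-_n(x) = x^{n+1} f^-_n(1/x)$. *)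

theory Defs
  imports "HOL-Computational_Algebra.Polynomial"
begin

text \<open>A signed permutation is a pair (S, w): S = {a_1,...,a_n} with a_i in {i,-i},
  and w a bijection S to S. Outside S, w is normalised to the identity so that
  each signed permutation has a unique representation.\<close>

type_synonym signed_perm = "int set \<times> (int \<Rightarrow> int)"

definition signsets :: "nat \<Rightarrow> int set set" where
  "signsets n = {S. \<exists>a. S = a ` {1..n} \<and> (\<forall>i\<in>{1..n}. a i = int i \<or> a i = - int i)}"

definition Bn :: "nat \<Rightarrow> signed_perm set" where
  "Bn n = {(S, w). S \<in> signsets n \<and> bij_betw w S S \<and> (\<forall>x. x \<notin> S \<longrightarrow> w x = x)}"

definition excB :: "signed_perm \<Rightarrow> nat" where
  "excB p = (case p of (S, w) \<Rightarrow> card {a\<in>S. w a > a \<or> (a < 0 \<and> w a = a)})"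

definition DB :: "nat \<Rightarrow> signed_perm set" where
  "DB n = {(S, w) \<in> Bn n. \<not> (\<exists>a\<in>S. a > 0 \<and> w a = a)}"

definition Bstar :: "nat \<Rightarrow> signed_perm set" where
  "Bstar n = {(S, w) \<in> Bn n. w (Min S) > 0}"

definition dB :: "nat \<Rightarrow> real poly" where
  "dB n = (\<Sum>p\<in>DB n. monom 1 (excB p))"

definition fpm :: "nat \<Rightarrow> real poly \<times> real poly" where
  "fpm n = (THE (fp, fm). dB n = fp + fm
      \<and> (\<forall>x::real. x \<noteq> 0 \<longrightarrow> poly fp x = x ^ n * poly fp (1 / x))
      \<and> (\<forall>x::real. x \<noteq> 0 \<longrightarrow> poly fm x = x ^ (n + 1) * poly fm (1 / x)))"

definition fplus :: "nat \<Rightarrow> real poly" where "fplus n = fst (fpm n)"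
definition fminus :: "nat \<Rightarrow> real poly" where "fminus n = snd (fpm n)"

end

theory Submission
  imports Defs "HOL-Combinatorics.Permutations"
begin

text \<open>
  The two sums add up to \<open>d\<^sup>B\<^sub>n\<close>, and a decomposition of \<open>d\<^sup>B\<^sub>n\<close> into self-reciprocal
  polynomials of degrees \<open>n\<close> and \<open>n + 1\<close> is unique. So it suffices that among the derangements
  in \<open>B\<^sup>*\<^sub>n\<close> the number with \<open>j\<close> \<open>B\<close>-excedances is invariant under \<open>j \<mapsto> n - j\<close>, and among the
  others under \<open>j \<mapsto> n + 1 - j\<close>. We prove this for derangements of any finite set \<open>S\<close> of
  nonzero integers, by strong induction on \<open>|S|\<close>: with \<open>m = max S\<close>, a derangement either fixes
  \<open>m\<close> (only possible if \<open>m < 0\<close>), or it is \<open>\<tau> \<circ> (i m)\<close> with \<open>\<tau>\<close> a derangement of \<open>S - {m}\<close>, or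
  of \<open>S - {m, i}\<close> when \<open>\<tau>\<close> fixes a positive \<open>i\<close>. This gives a recurrence for the counts that
  visibly preserves the symmetry.
\<close>

section \<open>Derangements of a set of nonzero integers\<close>

definition sderangements :: "int set \<Rightarrow> (int \<Rightarrow> int) set" where
  "sderangements S = {w. w permutes S \<and> (\<forall>a\<in>S. 0 < a \<longrightarrow> w a \<noteq> a)}"

definition wexc :: "int set \<Rightarrow> (int \<Rightarrow> int) \<Rightarrow> nat" where
  "wexc S w = card {a\<in>S. a \<le> w a}"

text \<open>
  \<open>starred S w\<close> models \<open>w \<in> B\<^sup>*\<close>. The empty set counts as starred; this keeps the recurrence
  below free of special cases.
\<close>

definition starred :: "int set \<Rightarrow> (int \<Rightarrow> int) \<Rightarrow> bool" where
  "starred S w \<longleftrightarrow> S = {} \<or> 0 < w (Min S)"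

definition sder_count :: "int set \<Rightarrow> bool \<Rightarrow> int \<Rightarrow> int" where
  "sder_count S b j =
     (\<Sum>w\<in>sderangements S. if starred S w = b \<and> int (wexc S w) = j then 1 else 0)"

lemma finite_sderangements: "finite S \<Longrightarrow> finite (sderangements S)"
  by (rule finite_subset[OF _ finite_permutations[of S]]) (auto simp: sderangements_def)

lemma permutes_compose_transpose:
  assumes "\<tau> permutes T" "T \<subseteq> S" "i \<in> S" "m \<in> S"
  shows "\<tau> \<circ> transpose i m permutes S"
  using assms permutes_compose permutes_subset permutes_swap_id by metis

lemma sderangements_fixing:
  assumes "m \<in> S" "0 \<notin> S"
  shows "{w\<in>sderangements S. w m = m} = (if m < 0 then sderangements (S - {m}) else {})"
proof (cases "m < 0")
  case True
  have "{w\<in>sderangements S. w m = m} = sderangements (S - {m})"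
  proof (rule set_eqI, rule iffI)
    fix w assume "w \<in> {w\<in>sderangements S. w m = m}"
    hence "w permutes S" "\<forall>a\<in>S. 0 < a \<longrightarrow> w a \<noteq> a" "w m = m"
      by (auto simp: sderangements_def)
    moreover have "w permutes (S - {m})"
      by (rule permutes_superset[OF \<open>w permutes S\<close>]) (use \<open>w m = m\<close> in auto)
    ultimately show "w \<in> sderangements (S - {m})" by (auto simp: sderangements_def)
  next
    fix w assume "w \<in> sderangements (S - {m})"
    hence "w permutes (S - {m})" "\<forall>a\<in>S-{m}. 0 < a \<longrightarrow> w a \<noteq> a"
      by (auto simp: sderangements_def)
    moreover have "w permutes S" by (rule permutes_subset[OF \<open>w permutes (S - {m})\<close>]) auto
    moreover have "w m = m" using \<open>w permutes (S - {m})\<close> by (auto intro: permutes_not_in)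
    ultimately show "w \<in> {w\<in>sderangements S. w m = m}" using True by (auto simp: sderangements_def)
  qed
  thus ?thesis using True by simp
next
  case False
  hence "0 < m" using assms by (cases "m = 0") auto
  thus ?thesis using False assms by (auto simp: sderangements_def)
qed

text \<open>
  A derangement \<open>w\<close> with \<open>w m \<noteq> m\<close> is \<open>\<tau> \<circ> (i m)\<close> for \<open>i = w\<inverse> m\<close>; then \<open>\<tau>\<close> fixes \<open>m\<close>, and it
  is a derangement of \<open>S - {m}\<close> unless it fixes \<open>i\<close>, in which case \<open>i > 0\<close>.
\<close>

definition transpose_data :: "int set \<Rightarrow> int \<Rightarrow> (int \<times> (int \<Rightarrow> int)) set" where
  "transpose_data S m =
     (SIGMA i:S - {m}. sderangements (S - {m}))
     \<union> (SIGMA i:{i\<in>S - {m}. 0 < i}. sderangements (S - {m} - {i}))"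

lemma transpose_data_disjoint:
  "(SIGMA i:S'. sderangements S') \<inter> (SIGMA i:{i\<in>S'. 0 < i}. sderangements (S' - {i})) = {}"
proof (rule ccontr)
  assume "(SIGMA i:S'. sderangements S') \<inter> (SIGMA i:{i\<in>S'. 0 < i}. sderangements (S' - {i})) \<noteq> {}"
  then obtain i \<tau> where A: "i \<in> S'" "0 < i" "\<tau> \<in> sderangements S'" "\<tau> \<in> sderangements (S' - {i})"
    by auto
  hence "\<tau> i = i" by (auto simp: sderangements_def intro: permutes_not_in)
  thus False using A by (auto simp: sderangements_def)
qed

lemma transpose_data_permutes:
  assumes "(i, \<tau>) \<in> transpose_data S m"
  shows "\<tau> permutes S - {m}" "i \<in> S - {m}"
  using assms by (auto simp: transpose_data_def sderangements_def intro: permutes_subset)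

lemma inj_on_transpose_data:
  assumes "m \<in> S"
  shows "inj_on (\<lambda>(i, \<tau>). \<tau> \<circ> transpose i m) (transpose_data S m)"
proof (rule inj_onI, clarify)
  fix i \<tau> i' \<tau>'
  assume A: "(i, \<tau>) \<in> transpose_data S m" and B: "(i', \<tau>') \<in> transpose_data S m"
    and E: "\<tau> \<circ> transpose i m = \<tau>' \<circ> transpose i' m"
  note t = transpose_data_permutes[OF A] transpose_data_permutes[OF B]
  have "\<tau> m = m" "\<tau>' m = m" using t by (auto intro: permutes_not_in)
  hence "(\<tau> \<circ> transpose i m) i = m" "(\<tau>' \<circ> transpose i' m) i' = m" by simp_all
  moreover have "inj (\<tau> \<circ> transpose i m)"
    using permutes_compose_transpose[OF t(1)] t(2) assms by (blast intro: permutes_inj)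
  ultimately have ii: "i = i'" using E by (metis injD)
  have "\<tau> = (\<tau> \<circ> transpose i m) \<circ> transpose i m" by (simp add: fun_eq_iff)
  also have "\<dots> = (\<tau>' \<circ> transpose i' m) \<circ> transpose i m" using E by simp
  also have "\<dots> = \<tau>'" using ii by (simp add: fun_eq_iff)
  finally show "i = i' \<and> \<tau> = \<tau>'" using ii by simp
qed

lemma transpose_data_image_subset:
  assumes "m \<in> S" and data: "(i, \<tau>) \<in> transpose_data S m"
  shows "\<tau> \<circ> transpose i m \<in> {w\<in>sderangements S. w m \<noteq> m}"
proof -
  define w where "w = \<tau> \<circ> transpose i m"
  note t = transpose_data_permutes[OF data]
  have tm: "\<tau> m = m" using t by (auto intro: permutes_not_in)
  have perm: "w permutes S" unfolding w_def using permutes_compose_transpose[OF t(1)] t(2) assms(1)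
    by blast
  have "\<tau> i \<in> S - {m}" using t permutes_in_image by metis
  hence wm: "w m \<noteq> m" by (auto simp: w_def)
  have "w a \<noteq> a" if "a \<in> S" "0 < a" for a
  proof (cases "a = m \<or> a = i")
    case True thus ?thesis using wm tm by (auto simp: w_def)
  next
    case False
    hence "w a = \<tau> a" by (simp add: w_def)
    moreover have "\<tau> a \<noteq> a" using data that False
      by (auto simp: transpose_data_def sderangements_def)
    ultimately show ?thesis by simp
  qed
  thus ?thesis using perm wm by (simp add: sderangements_def w_def)
qed

lemma transpose_data_image_supset:
  assumes "m \<in> S" and w: "w \<in> sderangements S" "w m \<noteq> m"
  shows "w \<in> (\<lambda>(i, \<tau>). \<tau> \<circ> transpose i m) ` transpose_data S m"
proof -
  have perm: "w permutes S" and nf: "\<forall>a\<in>S. 0 < a \<longrightarrow> w a \<noteq> a"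
    using w by (auto simp: sderangements_def)
  define i where "i = inv w m"
  have wi: "w i = m" using perm by (simp add: i_def permutes_inverses)
  have iS: "i \<in> S - {m}" using perm wi assms(1) w(2) by (metis permutes_in_image DiffI singletonD)
  define \<tau> where "\<tau> = w \<circ> transpose i m"
  have "\<tau> permutes S" unfolding \<tau>_def using permutes_compose[OF permutes_swap_id perm] iS assms(1)
    by blast
  moreover have "\<tau> m = m" using wi by (simp add: \<tau>_def)
  ultimately have tS': "\<tau> permutes S - {m}" by (auto intro: permutes_superset)
  have weq: "w = \<tau> \<circ> transpose i m" by (simp add: \<tau>_def fun_eq_iff)
  have "(i, \<tau>) \<in> transpose_data S m"
  proof (cases "\<tau> i = i \<and> 0 < i")
    case True
    have "\<tau> permutes S - {m} - {i}" by (rule permutes_superset[OF tS']) (use True in auto)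
    moreover have "\<forall>a\<in>S - {m} - {i}. 0 < a \<longrightarrow> \<tau> a \<noteq> a" using nf by (auto simp: \<tau>_def)
    ultimately show ?thesis using iS True by (simp add: transpose_data_def sderangements_def)
  next
    case False
    have "\<tau> a \<noteq> a" if "a \<in> S - {m}" "0 < a" for a
      using False nf that by (cases "a = i") (auto simp: \<tau>_def)
    thus ?thesis using iS tS' by (simp add: transpose_data_def sderangements_def)
  qed
  thus ?thesis using weq by (auto intro!: image_eqI[where x = "(i, \<tau>)"])
qed

lemma bij_betw_transpose_data:
  assumes "m \<in> S"
  shows "bij_betw (\<lambda>(i, \<tau>). \<tau> \<circ> transpose i m) (transpose_data S m)
           {w\<in>sderangements S. w m \<noteq> m}"
  using inj_on_transpose_data[OF assms] transpose_data_image_subset[OF assms]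
    transpose_data_image_supset[OF assms]
  by (auto simp: bij_betw_def)

lemma sum_sderangements_decompose:
  assumes fin: "finite S" and mS: "m \<in> S" and z: "0 \<notin> S"
  shows "(\<Sum>w\<in>sderangements S. f w) = (if m < 0 then (\<Sum>w\<in>sderangements (S - {m}). f w) else 0)
     + (\<Sum>\<tau>\<in>sderangements (S - {m}). \<Sum>i\<in>S - {m}. f (\<tau> \<circ> transpose i m))
     + (\<Sum>i\<in>{i\<in>S - {m}. 0 < i}. \<Sum>\<tau>\<in>sderangements (S - {m} - {i}). f (\<tau> \<circ> transpose i m))"
proof -
  define S' where "S' = S - {m}"
  have finS': "finite S'" using fin by (simp add: S'_def)
  have "sderangements S = {w\<in>sderangements S. w m = m} \<union> {w\<in>sderangements S. w m \<noteq> m}"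
    by auto
  hence "(\<Sum>w\<in>sderangements S. f w)
      = (\<Sum>w\<in>{w\<in>sderangements S. w m = m}. f w) + (\<Sum>w\<in>{w\<in>sderangements S. w m \<noteq> m}. f w)"
    by (subst sum.union_disjoint[symmetric]) (use finite_sderangements[OF fin] in auto)
  also have "(\<Sum>w\<in>{w\<in>sderangements S. w m = m}. f w)
      = (if m < 0 then (\<Sum>w\<in>sderangements S'. f w) else 0)"
    using sderangements_fixing[OF mS z] by (simp add: S'_def)
  also have "(\<Sum>w\<in>{w\<in>sderangements S. w m \<noteq> m}. f w)
      = (\<Sum>(i, \<tau>)\<in>transpose_data S m. f (\<tau> \<circ> transpose i m))"
    using sum.reindex_bij_betw[OF bij_betw_transpose_data[OF mS], of f]
    by (simp add: case_prod_unfold)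
  also have "\<dots> = (\<Sum>(i, \<tau>)\<in>(SIGMA i:S'. sderangements S'). f (\<tau> \<circ> transpose i m))
      + (\<Sum>(i, \<tau>)\<in>(SIGMA i:{i\<in>S'. 0 < i}. sderangements (S' - {i})). f (\<tau> \<circ> transpose i m))"
    unfolding transpose_data_def S'_def[symmetric]
    by (rule sum.union_disjoint[OF _ _ transpose_data_disjoint])
       (use finS' in \<open>auto intro!: finite_SigmaI finite_sderangements\<close>)
  also have "(\<Sum>(i, \<tau>)\<in>(SIGMA i:S'. sderangements S'). f (\<tau> \<circ> transpose i m))
      = (\<Sum>\<tau>\<in>sderangements S'. \<Sum>i\<in>S'. f (\<tau> \<circ> transpose i m))"
    by (simp add: sum.cartesian_product[symmetric] sum.swap[of _ S'])
  also have "(\<Sum>(i, \<tau>)\<in>(SIGMA i:{i\<in>S'. 0 < i}. sderangements (S' - {i})). f (\<tau> \<circ> transpose i m))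
      = (\<Sum>i\<in>{i\<in>S'. 0 < i}. \<Sum>\<tau>\<in>sderangements (S' - {i}). f (\<tau> \<circ> transpose i m))"
    by (subst sum.Sigma) (use finS' in \<open>auto intro: finite_sderangements\<close>)
  finally show ?thesis by (simp add: S'_def o_def add.assoc)
qed

section \<open>Removing the maximum\<close>

lemma sum_indicator_eq_card:
  "finite A \<Longrightarrow> (\<Sum>x\<in>A. if P x then 1 else 0) = (of_nat (card {x\<in>A. P x}) :: 'b::semiring_1)"
  by (simp add: sum.inter_filter[symmetric])

lemma wexc_fix:
  assumes "finite S" "m \<in> S" "\<tau> permutes S - {m}"
  shows "wexc S \<tau> = Suc (wexc (S - {m}) \<tau>)"
proof -
  have "\<tau> m = m" using assms(3) by (auto intro: permutes_not_in)
  hence "{a\<in>S. a \<le> \<tau> a} = insert m {a\<in>S - {m}. a \<le> \<tau> a}" using assms(2) by auto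
  thus ?thesis using assms(1) by (simp add: wexc_def)
qed

lemma wexc_compose_transpose:
  assumes fin: "finite S" and mS: "m \<in> S" and mmax: "\<forall>a\<in>S. a \<le> m"
    and i: "i \<in> S - {m}" and tau: "\<tau> permutes S - {m}"
  shows "wexc S (\<tau> \<circ> transpose i m) = Suc (card {a\<in>S - {m} - {i}. a \<le> \<tau> a})"
proof -
  have tm: "\<tau> m = m" using tau by (auto intro: permutes_not_in)
  have "\<tau> i \<in> S - {m}" using tau i by (metis permutes_in_image)
  hence tilt: "\<tau> i < m" using mmax by force
  have "{a\<in>S. a \<le> (\<tau> \<circ> transpose i m) a} = insert i {a\<in>S - {m} - {i}. a \<le> \<tau> a}"
    using i tilt tm mmax by (auto simp: transpose_def)
  moreover have "finite {a\<in>S - {m} - {i}. a \<le> \<tau> a}" using fin by auto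
  ultimately show ?thesis by (simp add: wexc_def)
qed

lemma wexc_remove:
  assumes "finite S" "i \<in> S"
  shows "int (card {a\<in>S - {i}. a \<le> \<tau> a}) = int (wexc S \<tau>) - (if i \<le> \<tau> i then 1 else 0)"
proof -
  have "{a\<in>S - {i}. a \<le> \<tau> a} = {a\<in>S. a \<le> \<tau> a} - {i}" by auto
  moreover have "finite {a\<in>S. a \<le> \<tau> a}" using assms by auto
  moreover have "i \<le> \<tau> i \<Longrightarrow> card {a\<in>S. a \<le> \<tau> a} > 0"
    using assms by (auto simp: card_gt_0_iff)
  ultimately show ?thesis unfolding wexc_def using assms(2)
    by (cases "i \<le> \<tau> i") (simp_all add: card_Diff_singleton_if of_nat_diff)
qed

locale sder_step =
  fixes S :: "int set"
  assumes finite_S: "finite S" and zero_notin: "0 \<notin> S" and two_le_card: "2 \<le> card S"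
begin

definition "m = Max S"
definition "S' = S - {m}"
definition "p = Min S'"

lemma S_ne: "S \<noteq> {}" using two_le_card by auto
lemma max_in: "m \<in> S" using finite_S S_ne by (simp add: m_def)
lemma le_max: "\<forall>a\<in>S. a \<le> m" using finite_S by (simp add: m_def)
lemma finite_S': "finite S'" using finite_S by (simp add: S'_def)
lemma card_S': "card S' = card S - 1" using finite_S max_in by (simp add: S'_def)
lemma S'_ne: "S' \<noteq> {}" using card_S' two_le_card by auto
lemma min_in: "p \<in> S'" using finite_S' S'_ne by (simp add: p_def)
lemma min_le: "\<forall>a\<in>S'. p \<le> a" using finite_S' by (simp add: p_def)
lemma min_neq_max: "p \<noteq> m" using min_in by (simp add: S'_def)

lemma Min_S: "Min S = p"
proof (rule Min_eqI[OF finite_S])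
  show "p \<in> S" using min_in by (simp add: S'_def)
  fix a assume "a \<in> S"
  thus "p \<le> a" using min_le le_max min_in by (cases "a = m") (auto simp: S'_def)
qed

lemma starred_S': "starred S' \<tau> = (0 < \<tau> p)"
  using S'_ne by (simp add: starred_def p_def)

lemma starred_fix: "starred S \<tau> = starred S' \<tau>"
  using S_ne S'_ne by (simp add: starred_def Min_S p_def)

lemma starred_transpose:
  assumes "\<tau> permutes S'" "i \<in> S'"
  shows "starred S (\<tau> \<circ> transpose i m) = (if i = p then 0 < m else starred S' \<tau>)"
proof -
  have "\<tau> m = m" using assms(1) by (auto simp: S'_def intro: permutes_not_in)
  hence "starred S (\<tau> \<circ> transpose i m) = (if i = p then 0 < m else 0 < \<tau> p)"
    using S_ne min_neq_max by (auto simp: starred_def Min_S)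
  thus ?thesis using starred_S' by simp
qed

lemma starred_transpose_fixed:
  assumes i: "i \<in> S'" "0 < i" and rho: "\<rho> \<in> sderangements (S' - {i})"
  shows "starred S (\<rho> \<circ> transpose i m) = starred (S' - {i}) \<rho>"
proof -
  have rp: "\<rho> permutes S' - {i}" using rho by (simp add: sderangements_def)
  have rm: "\<rho> m = m" using rp by (auto simp: S'_def intro: permutes_not_in)
  show ?thesis
  proof (cases "i = p")
    case True
    \<comment> \<open>then every element of \<open>S\<close> is positive, so both sides hold\<close>
    have "0 < m" using i le_max by (auto simp: S'_def)
    hence "starred S (\<rho> \<circ> transpose i m)" using True rm by (simp add: starred_def Min_S)
    moreover have "starred (S' - {i}) \<rho>"
    proof (cases "S' - {i} = {}")
      case False
      hence "Min (S' - {i}) \<in> S' - {i}" using finite_S' by (intro Min_in) auto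
      hence "\<rho> (Min (S' - {i})) \<in> S' - {i}" by (rule iffD2[OF permutes_in_image[OF rp]])
      hence "0 < \<rho> (Min (S' - {i}))" using min_le True i by force
      thus ?thesis by (simp add: starred_def)
    qed (simp add: starred_def)
    ultimately show ?thesis by simp
  next
    case False
    have "Min (S' - {i}) = p"
      by (rule Min_eqI) (use finite_S' min_le min_in False in auto)
    moreover have "S' - {i} \<noteq> {}" using min_in False by auto
    ultimately show ?thesis using False min_neq_max S_ne by (simp add: starred_def Min_S)
  qed
qed

lemma wexc_transpose:
  assumes "\<tau> permutes S'" "i \<in> S'"
  shows "int (wexc S (\<tau> \<circ> transpose i m)) = int (wexc S' \<tau>) + (if i \<le> \<tau> i then 0 else 1)"
  using wexc_compose_transpose[OF finite_S max_in le_max, of i \<tau>]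
    wexc_remove[OF finite_S' assms(2), of \<tau>] assms
  by (simp add: S'_def)

lemma wexc_transpose_fixed:
  assumes "i \<in> S'" "\<rho> \<in> sderangements (S' - {i})"
  shows "wexc S (\<rho> \<circ> transpose i m) = Suc (wexc (S' - {i}) \<rho>)"
proof -
  have "\<rho> permutes S'" using assms(2) by (auto simp: sderangements_def intro: permutes_subset)
  thus ?thesis using wexc_compose_transpose[OF finite_S max_in le_max, of i \<rho>] assms(1)
    by (simp add: wexc_def S'_def)
qed

lemma card_weak_exc_nonmin:
  assumes "\<tau> permutes S'"
  shows "int (card {i\<in>S' - {p}. i \<le> \<tau> i}) = int (wexc S' \<tau>) - 1"
  using wexc_remove[OF finite_S' min_in, of \<tau>] assms min_in min_le
  by (simp add: permutes_in_image)

lemma card_non_weak_exc_nonmin: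
  assumes "\<tau> permutes S'"
  shows "int (card {i\<in>S' - {p}. \<not> i \<le> \<tau> i}) = int (card S') - int (wexc S' \<tau>)"
proof -
  have "p \<le> \<tau> p" using assms min_in min_le by (simp add: permutes_in_image)
  hence "{i\<in>S' - {p}. \<not> i \<le> \<tau> i} = S' - {a\<in>S'. a \<le> \<tau> a}" by auto
  moreover have "card {a\<in>S'. a \<le> \<tau> a} \<le> card S'" using finite_S' by (intro card_mono) auto
  ultimately show ?thesis using finite_S' by (simp add: card_Diff_subset wexc_def of_nat_diff)
qed

text \<open>
  Moving \<open>m\<close> into the slot of \<open>p = min S'\<close> makes \<open>\<tau> \<circ> (p m)\<close> starred iff \<open>m > 0\<close>, keeping the
  excedance number; any other slot \<open>i\<close> keeps starredness and adds an excedance iff \<open>i > \<tau> i\<close>.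
\<close>

lemma sum_transpose_indicator:
  assumes tau: "\<tau> \<in> sderangements S'"
  shows "(\<Sum>i\<in>S'. if starred S (\<tau> \<circ> transpose i m) = b
                      \<and> int (wexc S (\<tau> \<circ> transpose i m)) = j then 1 else 0::int)
    = (if (0 < m) = b \<and> int (wexc S' \<tau>) = j then 1 else 0)
      + (if starred S' \<tau> = b \<and> int (wexc S' \<tau>) = j then j - 1 else 0)
      + (if starred S' \<tau> = b \<and> int (wexc S' \<tau>) = j - 1 then int (card S') - j + 1 else 0)"
proof -
  have tp: "\<tau> permutes S'" using tau by (simp add: sderangements_def)
  define e where "e = int (wexc S' \<tau>)"
  define c where "c = starred S' \<tau>"
  define F where "F i = (if starred S (\<tau> \<circ> transpose i m) = b
                      \<and> int (wexc S (\<tau> \<circ> transpose i m)) = j then 1 else 0::int)" for i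
  have "p \<le> \<tau> p" using tp min_in min_le by (simp add: permutes_in_image)
  hence "F p = (if (0 < m) = b \<and> e = j then 1 else 0)"
    using starred_transpose[OF tp min_in] wexc_transpose[OF tp min_in] by (simp add: F_def e_def)
  moreover have "F i = (if c = b \<and> e = j \<and> i \<le> \<tau> i then 1 else 0)
      + (if c = b \<and> e = j - 1 \<and> \<not> i \<le> \<tau> i then 1 else 0)" if "i \<in> S' - {p}" for i
    using starred_transpose[OF tp, of i] wexc_transpose[OF tp, of i] that
    by (auto simp: F_def e_def c_def)
  ultimately have "sum F S' = (if (0 < m) = b \<and> e = j then 1 else 0)
        + (\<Sum>i\<in>S' - {p}. if c = b \<and> e = j \<and> i \<le> \<tau> i then 1 else 0)
        + (\<Sum>i\<in>S' - {p}. if c = b \<and> e = j - 1 \<and> \<not> i \<le> \<tau> i then 1 else 0)"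
    by (simp add: sum.remove[OF finite_S' min_in] sum.distrib[symmetric] add.assoc)
  also have "(\<Sum>i\<in>S' - {p}. if c = b \<and> e = j \<and> i \<le> \<tau> i then 1 else 0::int)
      = (if c = b \<and> e = j then int (card {i\<in>S' - {p}. i \<le> \<tau> i}) else 0)"
    using sum_indicator_eq_card[of "S' - {p}" "\<lambda>i. i \<le> \<tau> i"] finite_S' by auto
  also have "(\<Sum>i\<in>S' - {p}. if c = b \<and> e = j - 1 \<and> \<not> i \<le> \<tau> i then 1 else 0::int)
      = (if c = b \<and> e = j - 1 then int (card {i\<in>S' - {p}. \<not> i \<le> \<tau> i}) else 0)"
    using sum_indicator_eq_card[of "S' - {p}" "\<lambda>i. \<not> i \<le> \<tau> i"] finite_S' by auto
  finally show ?thesis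
    using card_weak_exc_nonmin[OF tp] card_non_weak_exc_nonmin[OF tp] by (simp add: F_def e_def c_def)
qed

lemma sder_count_recurrence:
  "sder_count S b j = (if m < 0 then sder_count S' b (j - 1) else 0)
     + (if (0 < m) = b then sder_count S' True j + sder_count S' False j else 0)
     + (j - 1) * sder_count S' b j + (int (card S') - j + 1) * sder_count S' b (j - 1)
     + (\<Sum>i\<in>{i\<in>S'. 0 < i}. sder_count (S' - {i}) b (j - 1))"
proof -
  define f where "f w = (if starred S w = b \<and> int (wexc S w) = j then 1 else 0::int)" for w
  define g where "g c k \<tau> = (if starred S' \<tau> = c \<and> int (wexc S' \<tau>) = k then 1 else 0::int)"
    for c k \<tau>
  have "sder_count S b j = sum f (sderangements S)" by (simp add: sder_count_def f_def)
  also have "\<dots> = (if m < 0 then (\<Sum>w\<in>sderangements S'. f w) else 0)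
     + (\<Sum>\<tau>\<in>sderangements S'. \<Sum>i\<in>S'. f (\<tau> \<circ> transpose i m))
     + (\<Sum>i\<in>{i\<in>S'. 0 < i}. \<Sum>\<tau>\<in>sderangements (S' - {i}). f (\<tau> \<circ> transpose i m))"
    using sum_sderangements_decompose[OF finite_S max_in zero_notin, of f] by (simp add: S'_def)
  also have "(\<Sum>w\<in>sderangements S'. f w) = sder_count S' b (j - 1)"
    unfolding sder_count_def
  proof (rule sum.cong[OF refl])
    fix w assume "w \<in> sderangements S'"
    hence "wexc S w = Suc (wexc S' w)"
      using wexc_fix[OF finite_S max_in] by (simp add: sderangements_def S'_def)
    thus "f w = (if starred S' w = b \<and> int (wexc S' w) = j - 1 then 1 else 0)"
      by (auto simp: f_def starred_fix)
  qed
  also have "(\<Sum>\<tau>\<in>sderangements S'. \<Sum>i\<in>S'. f (\<tau> \<circ> transpose i m))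
     = (\<Sum>\<tau>\<in>sderangements S'. (if (0 < m) = b then g True j \<tau> + g False j \<tau> else 0)
          + (j - 1) * g b j \<tau> + (int (card S') - j + 1) * g b (j - 1) \<tau>)"
    unfolding f_def by (rule sum.cong[OF refl]) (auto simp: sum_transpose_indicator g_def)
  also have "\<dots> = (if (0 < m) = b then sder_count S' True j + sder_count S' False j else 0)
     + (j - 1) * sder_count S' b j + (int (card S') - j + 1) * sder_count S' b (j - 1)"
    by (simp add: sum.distrib sum_distrib_left sder_count_def g_def)
  also have "(\<Sum>i\<in>{i\<in>S'. 0 < i}. \<Sum>\<tau>\<in>sderangements (S' - {i}). f (\<tau> \<circ> transpose i m))
     = (\<Sum>i\<in>{i\<in>S'. 0 < i}. sder_count (S' - {i}) b (j - 1))"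
    unfolding sder_count_def f_def
    by (intro sum.cong refl) (auto simp: starred_transpose_fixed wexc_transpose_fixed)
  finally show ?thesis by (simp add: add.assoc)
qed

end

section \<open>Symmetry of the counts\<close>

definition sder_symmetric :: "int set \<Rightarrow> bool" where
  "sder_symmetric S \<longleftrightarrow>
     (\<forall>j. sder_count S True j = sder_count S True (int (card S) - j))
     \<and> (\<forall>j. sder_count S False j = sder_count S False (int (card S) + 1 - j))"

lemma sder_count_True_all_negative:
  assumes "finite S" "S \<noteq> {}" "\<forall>a\<in>S. a < 0"
  shows "sder_count S True j = 0"
  unfolding sder_count_def
proof (rule sum.neutral, rule ballI)
  fix w assume "w \<in> sderangements S"
  hence "w (Min S) \<in> S" using assms by (simp add: sderangements_def permutes_in_image)
  hence "\<not> starred S w" using assms by (auto simp: starred_def)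
  thus "(if starred S w = True \<and> int (wexc S w) = j then 1 else 0) = 0" by simp
qed

lemma sder_symmetric_card_le_1:
  assumes "finite S" "0 \<notin> S" "card S \<le> 1"
  shows "sder_symmetric S"
proof (cases "card S = 0")
  case True
  hence "S = {}" using assms by simp
  moreover have "sderangements {} = {id}" by (auto simp: sderangements_def)
  ultimately show ?thesis by (simp add: sder_symmetric_def sder_count_def starred_def wexc_def)
next
  case False
  hence "card S = 1" using assms(3) by simp
  then obtain a where S: "S = {a}" by (auto simp: card_1_singleton_iff)
  show ?thesis
  proof (cases "a < 0")
    case True
    hence "sderangements {a} = {id}" by (auto simp: sderangements_def)
    thus ?thesis using S True
      by (auto simp: sder_symmetric_def sder_count_def starred_def wexc_def)
  next
    case False
    hence "sderangements {a} = {}" using S assms(2) by (auto simp: sderangements_def)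
    thus ?thesis using S by (simp add: sder_symmetric_def sder_count_def)
  qed
qed

context sder_step
begin

lemma sder_count_S'_reflect:
  assumes "sder_symmetric S'"
  shows "sder_count S' True k = sder_count S' True (int (card S) - 1 - k)"
    and "sder_count S' False k = sder_count S' False (int (card S) - k)"
proof -
  have c: "int (card S') = int (card S) - 1" using card_S' two_le_card by (simp add: of_nat_diff)
  show "sder_count S' True k = sder_count S' True (int (card S) - 1 - k)"
    using assms unfolding sder_symmetric_def c by blast
  show "sder_count S' False k = sder_count S' False (int (card S) - k)"
    using assms unfolding sder_symmetric_def c by (metis diff_add_cancel)
qed

lemma sder_count_S'_remove_reflect:
  assumes "i \<in> S'" "sder_symmetric (S' - {i})"
  shows "sder_count (S' - {i}) True k = sder_count (S' - {i}) True (int (card S) - 2 - k)"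
    and "sder_count (S' - {i}) False k = sder_count (S' - {i}) False (int (card S) - 1 - k)"
proof -
  have c: "int (card (S' - {i})) = int (card S) - 2"
    using assms(1) finite_S' card_S' two_le_card by (simp add: of_nat_diff)
  show "sder_count (S' - {i}) True k = sder_count (S' - {i}) True (int (card S) - 2 - k)"
    using assms(2) unfolding sder_symmetric_def c by blast
  have "int (card S) - 2 + 1 - k = int (card S) - 1 - k" by simp
  thus "sder_count (S' - {i}) False k = sder_count (S' - {i}) False (int (card S) - 1 - k)"
    using assms(2) unfolding sder_symmetric_def c by metis
qed

lemma sder_symmetric_step_max_neg:
  assumes "m < 0" "sder_symmetric S'"
  shows "sder_symmetric S"
proof -
  define n where "n = int (card S)"
  have all_neg: "\<forall>a\<in>S. a < 0" using le_max assms(1) by force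
  hence "\<forall>a\<in>S'. a < 0" by (simp add: S'_def)
  hence no_pos: "{i\<in>S'. 0 < i} = {}" and "sder_count S' True k = 0" for k
    using sder_count_True_all_negative[OF finite_S' S'_ne] by auto
  hence rec: "sder_count S False k = sder_count S' False (k - 1) + sder_count S' False k
      + (k - 1) * sder_count S' False k + (n - k) * sder_count S' False (k - 1)" for k
    using sder_count_recurrence[of False k, unfolded no_pos] assms(1) card_S' two_le_card
    by (simp add: n_def of_nat_diff)
  have "sder_count S False j = sder_count S False (n + 1 - j)" for j
  proof -
    have "sder_count S' False (n + 1 - j) = sder_count S' False (j - 1)"
      and "sder_count S' False (n + 1 - j - 1) = sder_count S' False j"
      using sder_count_S'_reflect(2)[OF assms(2), of "n + 1 - j"]
        sder_count_S'_reflect(2)[OF assms(2), of "n - j"] by (simp_all add: n_def)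
    thus ?thesis unfolding rec by (simp add: algebra_simps)
  qed
  thus ?thesis
    using sder_count_True_all_negative[OF finite_S S_ne all_neg] by (simp add: sder_symmetric_def n_def)
qed

lemma sder_symmetric_step_max_pos:
  assumes "0 < m" "sder_symmetric S'" "\<And>i. i \<in> S' \<Longrightarrow> sder_symmetric (S' - {i})"
  shows "sder_symmetric S"
proof -
  define n where "n = int (card S)"
  define P where "P = {i\<in>S'. 0 < i}"
  have "int (card S') = n - 1" using card_S' two_le_card by (simp add: n_def of_nat_diff)
  hence rec: "sder_count S b k = (if b then sder_count S' True k + sder_count S' False k else 0)
      + (k - 1) * sder_count S' b k + (n - k) * sder_count S' b (k - 1)
      + (\<Sum>i\<in>P. sder_count (S' - {i}) b (k - 1))" for b k
    using sder_count_recurrence[of b k] assms(1) by (simp add: P_def)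
  have "sder_count S True j = sder_count S True (n - j)" for j
  proof -
    have "(\<Sum>i\<in>P. sder_count (S' - {i}) True (n - j - 1))
        = (\<Sum>i\<in>P. sder_count (S' - {i}) True (j - 1))"
      using sder_count_S'_remove_reflect(1)[of _ "n - j - 1"] assms(3)
      by (intro sum.cong) (simp_all add: P_def n_def)
    moreover have "sder_count S' True (n - j) = sder_count S' True (j - 1)"
      and "sder_count S' True (n - j - 1) = sder_count S' True j"
      and "sder_count S' False (n - j) = sder_count S' False j"
      using sder_count_S'_reflect[OF assms(2), of "n - j"] sder_count_S'_reflect[OF assms(2), of "n - j - 1"]
      by (simp_all add: n_def)
    ultimately show ?thesis unfolding rec[of True] by (simp add: algebra_simps)
  qed
  moreover have "sder_count S False j = sder_count S False (n + 1 - j)" for j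
  proof -
    have "(\<Sum>i\<in>P. sder_count (S' - {i}) False (n + 1 - j - 1))
        = (\<Sum>i\<in>P. sder_count (S' - {i}) False (j - 1))"
      using sder_count_S'_remove_reflect(2)[of _ "n + 1 - j - 1"] assms(3)
      by (intro sum.cong) (simp_all add: P_def n_def)
    moreover have "sder_count S' False (n + 1 - j) = sder_count S' False (j - 1)"
      and "sder_count S' False (n + 1 - j - 1) = sder_count S' False j"
      using sder_count_S'_reflect(2)[OF assms(2), of "n + 1 - j"]
        sder_count_S'_reflect(2)[OF assms(2), of "n - j"] by (simp_all add: n_def)
    ultimately show ?thesis unfolding rec[of False] by (simp add: algebra_simps)
  qed
  ultimately show ?thesis by (simp add: sder_symmetric_def n_def)
qed

end

lemma sder_symmetricI:
  assumes "finite S" "0 \<notin> S"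
  shows "sder_symmetric S"
  using assms
proof (induction "card S" arbitrary: S rule: less_induct)
  case less
  show ?case
  proof (cases "card S \<le> 1")
    case True
    thus ?thesis using sder_symmetric_card_le_1 less.prems by blast
  next
    case False
    interpret sder_step S using less.prems False by unfold_locales auto
    have "card S' < card S" using card_S' False by simp
    hence "sder_symmetric S'" using less.hyps finite_S' zero_notin by (simp add: S'_def)
    moreover have "sder_symmetric (S' - {i})" if "i \<in> S'" for i
    proof -
      have "card (S' - {i}) < card S"
        using \<open>card S' < card S\<close> finite_S' that by (meson card_Diff1_less order.strict_trans)
      thus ?thesis using less.hyps finite_S' zero_notin by (simp add: S'_def)
    qed
    moreover have "m \<noteq> 0" using max_in zero_notin by auto
    ultimately show ?thesis
      using sder_symmetric_step_max_neg sder_symmetric_step_max_pos by (meson linorder_neqE_linordered_idom)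
  qed
qed

lemma sder_count_eq_card:
  assumes "finite S"
  shows "sder_count S b (int j) = int (card {w\<in>{w\<in>sderangements S. starred S w = b}. wexc S w = j})"
  unfolding sder_count_def
  using sum_indicator_eq_card[OF finite_sderangements[OF assms],
      of "\<lambda>w. starred S w = b \<and> wexc S w = j"]
  by (simp add: conj_assoc)

lemma sder_count_reflect:
  assumes "finite S" "0 \<notin> S"
  shows "sder_count S b j = sder_count S b (int (card S) + (if b then 0 else 1) - j)"
proof (cases b)
  case True
  have "sder_count S True j = sder_count S True (int (card S) - j)"
    using sder_symmetricI[OF assms] unfolding sder_symmetric_def by blast
  thus ?thesis using True by simp
next
  case False
  have "sder_count S False j = sder_count S False (int (card S) + 1 - j)"
    using sder_symmetricI[OF assms] unfolding sder_symmetric_def by blast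
  thus ?thesis using False by simp
qed

section \<open>Self-reciprocal polynomials\<close>

definition self_reciprocal :: "nat \<Rightarrow> real poly \<Rightarrow> bool" where
  "self_reciprocal d p \<longleftrightarrow> (\<forall>x::real. x \<noteq> 0 \<longrightarrow> poly p x = x ^ d * poly p (1 / x))"

lemma self_reciprocal_diff:
  assumes "self_reciprocal d p" "self_reciprocal d q"
  shows "self_reciprocal d (p - q)"
  unfolding self_reciprocal_def
proof (intro allI impI)
  fix x :: real assume "x \<noteq> 0"
  hence "poly p x = x ^ d * poly p (1 / x)" "poly q x = x ^ d * poly q (1 / x)"
    using assms unfolding self_reciprocal_def by blast+
  thus "poly (p - q) x = x ^ d * poly (p - q) (1 / x)" by (simp add: right_diff_distrib)
qed

lemma self_reciprocal_sum:
  assumes "\<And>i. i \<in> I \<Longrightarrow> self_reciprocal d (f i)"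
  shows "self_reciprocal d (\<Sum>i\<in>I. f i)"
  unfolding self_reciprocal_def
proof (intro allI impI)
  fix x :: real assume "x \<noteq> 0"
  hence "poly (f i) x = x ^ d * poly (f i) (1 / x)" if "i \<in> I" for i
    using assms[OF that] unfolding self_reciprocal_def by blast
  thus "poly (\<Sum>i\<in>I. f i) x = x ^ d * poly (\<Sum>i\<in>I. f i) (1 / x)"
    by (simp add: poly_sum sum_distrib_left)
qed

lemma self_reciprocal_Suc_eq_0:
  assumes "self_reciprocal n g" "self_reciprocal (Suc n) g"
  shows "g = 0"
proof (rule ccontr)
  assume "g \<noteq> 0"
  have inv: "poly g (1 / y) = 0" if "y \<noteq> 0" "y \<noteq> 1" for y
  proof -
    have "poly g y = y ^ n * poly g (1 / y)" "poly g y = y ^ Suc n * poly g (1 / y)"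
      using assms that(1) unfolding self_reciprocal_def by blast+
    hence "y ^ n * (1 - y) * poly g (1 / y) = 0" by (simp add: algebra_simps)
    thus ?thesis using that by simp
  qed
  have "poly g y = 0" if "y \<noteq> 0" "y \<noteq> 1" for y using inv[of "1 / y"] that by simp
  hence "UNIV \<subseteq> {y. poly g y = 0} \<union> {0, 1}" by auto
  moreover have "finite ({y. poly g y = 0} \<union> {0, 1})" using poly_roots_finite[OF \<open>g \<noteq> 0\<close>] by simp
  ultimately show False using infinite_UNIV_char_0 finite_subset by blast
qed

lemma self_reciprocal_sum_monom:
  fixes e :: "'a \<Rightarrow> nat"
  assumes fin: "finite A" and bound: "\<And>w. w \<in> A \<Longrightarrow> e w \<le> d"
    and sym: "\<And>j. j \<le> d \<Longrightarrow> card {w\<in>A. e w = j} = card {w\<in>A. e w = d - j}"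
  shows "self_reciprocal d (\<Sum>w\<in>A. monom 1 (e w))"
  unfolding self_reciprocal_def poly_sum poly_monom
proof (intro allI impI)
  fix x :: real assume x: "x \<noteq> 0"
  define c where "c j = card {w\<in>A. e w = j}" for j
  have img: "e ` A \<subseteq> {0..d}" using bound by auto
  have "x ^ d * (\<Sum>w\<in>A. 1 * (1 / x) ^ e w) = (\<Sum>w\<in>A. x ^ (d - e w))"
    unfolding sum_distrib_left using bound x by (intro sum.cong) (simp_all add: power_diff power_one_over)
  also have "\<dots> = (\<Sum>j\<in>{0..d}. real (c j) * x ^ (d - j))"
    by (simp add: sum.group[OF fin _ img, symmetric] c_def)
  also have "\<dots> = (\<Sum>j\<in>{0..d}. real (c (d + 0 - j)) * x ^ (d - (d + 0 - j)))"
    by (rule sum.atLeastAtMost_rev)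
  also have "\<dots> = (\<Sum>j\<in>{0..d}. real (c j) * x ^ j)"
  proof (rule sum.cong[OF refl])
    fix j assume "j \<in> {0..d}"
    thus "real (c (d + 0 - j)) * x ^ (d - (d + 0 - j)) = real (c j) * x ^ j"
      using sym[of j] by (simp add: c_def)
  qed
  also have "\<dots> = (\<Sum>w\<in>A. 1 * x ^ e w)"
    by (simp add: sum.group[OF fin _ img, symmetric] c_def)
  finally show "(\<Sum>w\<in>A. 1 * x ^ e w) = x ^ d * (\<Sum>w\<in>A. 1 * (1 / x) ^ e w)" by simp
qed

lemma self_reciprocal_starred:
  assumes "finite S" "0 \<notin> S"
  shows "self_reciprocal (card S + (if b then 0 else 1))
           (\<Sum>w\<in>{w\<in>sderangements S. starred S w = b}. monom 1 (wexc S w))"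
proof (rule self_reciprocal_sum_monom)
  let ?d = "card S + (if b then 0 else 1)"
  show "finite {w\<in>sderangements S. starred S w = b}" using finite_sderangements[OF assms(1)] by simp
  show "wexc S w \<le> ?d" for w
    unfolding wexc_def using assms(1) card_mono[of S "{a\<in>S. a \<le> w a}"] by auto
  fix j assume "j \<le> ?d"
  hence "sder_count S b (int j) = sder_count S b (int (?d - j))"
    using sder_count_reflect[OF assms, of b "int j"] by (simp add: of_nat_diff)
  thus "card {w\<in>{w\<in>sderangements S. starred S w = b}. wexc S w = j}
      = card {w\<in>{w\<in>sderangements S. starred S w = b}. wexc S w = ?d - j}"
    unfolding sder_count_eq_card[OF assms(1)] by simp
qed

section \<open>Signed permutations\<close>

lemma signsetsD:
  assumes "S \<in> signsets n"
  shows "finite S" "0 \<notin> S" "card S = n"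
proof -
  obtain a where S: "S = a ` {1..n}" and a: "\<forall>i\<in>{1..n}. a i = int i \<or> a i = - int i"
    using assms by (auto simp: signsets_def)
  show "finite S" using S by simp
  show "0 \<notin> S" using S a by force
  have "inj_on a {1..n}"
  proof (rule inj_onI)
    fix i j assume "i \<in> {1..n}" "j \<in> {1..n}" "a i = a j"
    hence "\<bar>a i\<bar> = \<bar>a j\<bar>" by simp
    moreover have "\<bar>a i\<bar> = int i" "\<bar>a j\<bar> = int j" using a \<open>i \<in> _\<close> \<open>j \<in> _\<close> by force+
    ultimately show "i = j" by simp
  qed
  thus "card S = n" using S by (simp add: card_image)
qed

lemma finite_signsets: "finite (signsets n)"
proof (rule finite_subset[of _ "Pow {-int n..int n}"])
  show "signsets n \<subseteq> Pow {-int n..int n}"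
  proof
    fix S assume "S \<in> signsets n"
    then obtain a where S: "S = a ` {1..n}" and a: "\<forall>i\<in>{1..n}. a i = int i \<or> a i = - int i"
      by (auto simp: signsets_def)
    have "a i \<in> {-int n..int n}" if "i \<in> {1..n}" for i using a that by force
    thus "S \<in> Pow {-int n..int n}" using S by auto
  qed
qed simp

lemma DB_eq_Sigma: "DB n = (SIGMA S:signsets n. sderangements S)"
proof -
  have "(bij_betw w S S \<and> (\<forall>x. x \<notin> S \<longrightarrow> w x = x)) \<longleftrightarrow> w permutes S" for w S
    by (auto intro: bij_imp_permutes permutes_imp_bij permutes_not_in)
  thus ?thesis by (auto simp: DB_def Bn_def sderangements_def)
qed

lemma Bstar_iff_starred:
  assumes "n \<ge> 1" "(S, w) \<in> DB n"
  shows "(S, w) \<in> Bstar n \<longleftrightarrow> starred S w"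
proof -
  have "S \<noteq> {}" using assms signsetsD(3)[of S n] by (auto simp: DB_def Bn_def)
  thus ?thesis using assms(2) by (auto simp: Bstar_def DB_def starred_def)
qed

lemma excB_eq_wexc:
  assumes "0 \<notin> S" "w \<in> sderangements S"
  shows "excB (S, w) = wexc S w"
proof -
  have "{a\<in>S. w a > a \<or> (a < 0 \<and> w a = a)} = {a\<in>S. a \<le> w a}"
  proof (rule set_eqI)
    fix a show "a \<in> {a\<in>S. w a > a \<or> (a < 0 \<and> w a = a)} \<longleftrightarrow> a \<in> {a\<in>S. a \<le> w a}"
      using assms by (cases "a = 0") (auto simp: sderangements_def)
  qed
  thus ?thesis by (simp add: excB_def wexc_def)
qed

lemma self_reciprocal_signsets:
  "self_reciprocal (n + (if b then 0 else 1))
     (\<Sum>p\<in>(SIGMA S:signsets n. {w\<in>sderangements S. starred S w = b}). monom 1 (excB p))"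
proof -
  have eq: "(\<Sum>p\<in>(SIGMA S:signsets n. {w\<in>sderangements S. starred S w = b}). monom 1 (excB p))
      = (\<Sum>S\<in>signsets n. \<Sum>w\<in>{w\<in>sderangements S. starred S w = b}. monom 1 (wexc S w))"
    by (subst sum.Sigma)
       (auto simp: finite_signsets signsetsD finite_sderangements excB_eq_wexc intro!: sum.cong)
  have "self_reciprocal (n + (if b then 0 else 1))
      (\<Sum>w\<in>{w\<in>sderangements S. starred S w = b}. monom 1 (wexc S w))" if "S \<in> signsets n" for S
    using self_reciprocal_starred[OF signsetsD(1,2)[OF that], of b] signsetsD(3)[OF that] by simp
  thus ?thesis unfolding eq by (rule self_reciprocal_sum)
qed

lemma fplus_fminus_eqI:
  assumes "dB n = fp + fm" "self_reciprocal n fp" "self_reciprocal (n + 1) fm"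
  shows "fplus n = fp \<and> fminus n = fm"
proof -
  have "fpm n = (THE (gp, gm). dB n = gp + gm \<and> self_reciprocal n gp \<and> self_reciprocal (n + 1) gm)"
    by (simp add: fpm_def self_reciprocal_def)
  also have "\<dots> = (fp, fm)"
  proof (rule the_equality)
    fix z assume "case z of (gp, gm) \<Rightarrow>
      dB n = gp + gm \<and> self_reciprocal n gp \<and> self_reciprocal (n + 1) gm"
    then obtain gp gm where z: "z = (gp, gm)" and "dB n = gp + gm"
      and gp: "self_reciprocal n gp" and gm: "self_reciprocal (n + 1) gm" by auto
    hence diff: "gp - fp = fm - gm" using assms(1) by (simp add: algebra_simps)
    have "self_reciprocal n (gp - fp)" by (rule self_reciprocal_diff[OF gp assms(2)])
    moreover have "self_reciprocal (Suc n) (gp - fp)"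
      unfolding diff using self_reciprocal_diff[OF assms(3) gm] by simp
    ultimately have "gp - fp = 0" by (rule self_reciprocal_Suc_eq_0)
    thus "z = (fp, fm)" using diff z by simp
  qed (use assms in simp)
  finally show ?thesis by (simp add: fplus_def fminus_def)
qed

theorem proposition4p1:
  fixes n :: nat
  assumes "n \<ge> 1"
  shows "fplus n = (\<Sum>p\<in>DB n \<inter> Bstar n. monom 1 (excB p))
       \<and> fminus n = (\<Sum>p\<in>DB n - Bstar n. monom 1 (excB p))"
proof (rule fplus_fminus_eqI)
  show "dB n = (\<Sum>p\<in>DB n \<inter> Bstar n. monom 1 (excB p)) + (\<Sum>p\<in>DB n - Bstar n. monom 1 (excB p))"
    unfolding dB_def DB_eq_Sigma
    by (rule sum.Int_Diff) (auto simp: finite_signsets signsetsD finite_sderangements)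
  have "DB n \<inter> Bstar n = (SIGMA S:signsets n. {w\<in>sderangements S. starred S w = True})"
    and "DB n - Bstar n = (SIGMA S:signsets n. {w\<in>sderangements S. starred S w = False})"
    using Bstar_iff_starred[OF assms, unfolded DB_eq_Sigma] by (auto simp: DB_eq_Sigma)
  thus "self_reciprocal n (\<Sum>p\<in>DB n \<inter> Bstar n. monom 1 (excB p))"
    and "self_reciprocal (n + 1) (\<Sum>p\<in>DB n - Bstar n. monom 1 (excB p))"
    using self_reciprocal_signsets[of n True] self_reciprocal_signsets[of n False] by simp_all
qed

end
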